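(* Let $X,Y$ be measurable spaces, $P$ a probability on $X$, $\pi$ a probability on $X\times Y$ with $x$-marginal $P$, and $\nu$ a probability on $X$. Assume $S^{\nu}(P)$ and $H^{\nu}(\pi)$ are finite. Then \[IG(\pi,P)=S^{\nu}(P)-H^{\nu}(\pi).\]
   Context: $\mathcal{F}(\mu)$ is the set of measurable functions whose $\mu$-integral is well defined (not $+\infty-\infty$). For a probability $\rho$ on $X$: $S^{\rho}(P)=-\sup\{\int c\,dP:\ c\in\mathcal{F}(P),\ \int e^{c}\,d\rho=1\}$ and $H^{\rho}(\pi)=-\sup\{\int c\,d\pi:\ c\in\mathcal{F}(\pi),\ \int e^{c(x,y)}\,d\rho(x)=1\ \forall y\in Y\}$. The information gain of $\pi$ relative to $P$ is $IG(\pi,P):=-H^{P}(\pi)$ (the kernel $\hat\nu^y=P$ for all $y$). *)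

theory Defs
  imports "HOL-Probability.Probability"
begin

definition ext_integral :: "'a measure \<Rightarrow> ('a \<Rightarrow> real) \<Rightarrow> ereal" where
  "ext_integral M c =
     enn2ereal (\<integral>\<^sup>+ x. ennreal (c x) \<partial>M) - enn2ereal (\<integral>\<^sup>+ x. ennreal (- c x) \<partial>M)"

definition well_def_int :: "'a measure \<Rightarrow> ('a \<Rightarrow> real) \<Rightarrow> bool" where
  "well_def_int M c \<longleftrightarrow> c \<in> borel_measurable M \<and>
     \<not> ((\<integral>\<^sup>+ x. ennreal (c x) \<partial>M) = \<infinity> \<and> (\<integral>\<^sup>+ x. ennreal (- c x) \<partial>M) = \<infinity>)"

definition S_ent :: "'a measure \<Rightarrow> 'a measure \<Rightarrow> ereal" where
  "S_ent \<rho> P = - (SUP c \<in> {c. well_def_int P c \<and> (\<integral>\<^sup>+ x. ennreal (exp (c x)) \<partial>\<rho>) = 1}.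
                       ext_integral P c)"

definition H_ent :: "'a measure \<Rightarrow> 'b measure \<Rightarrow> ('a \<times> 'b) measure \<Rightarrow> ereal" where
  "H_ent \<rho> MY \<pi> = - (SUP c \<in> {c. well_def_int \<pi> c \<and>
        (\<forall>y\<in>space MY. (\<integral>\<^sup>+ x. ennreal (exp (c (x, y))) \<partial>\<rho>) = 1)}. ext_integral \<pi> c)"

definition info_gain :: "('a \<times> 'b) measure \<Rightarrow> 'b measure \<Rightarrow> 'a measure \<Rightarrow> ereal" where
  "info_gain \<pi> MY P = - H_ent P MY \<pi>"

end

theory Submission
  imports Defs
begin

text \<open>If P had a \<nu>-null set A of positive P-measure, the potentials t \<cdot> 1_A would be admissible
  for S^\<nu>(P) with values t \<cdot> P(A), so finiteness of S^\<nu>(P) gives P = f \<nu>. Gibbs' inequality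
  ln u \<le> u - 1 bounds every admissible potential c by ln f + exp c / f - 1, and ln f is (nearly)
  admissible itself, so S^\<nu>(P) = - \<integral> ln f dP. In the same way, shifting a potential c(x,y) by
  ln f(x) exchanges the normalisation against \<nu> for the normalisation against P, whence
  H^\<nu>(\<pi>) = H^P(\<pi>) - \<integral> ln f dP, the x-marginal of \<pi> being P. Subtracting the two identities
  gives the information gain -H^P(\<pi>).\<close>

section \<open>Extended integrals\<close>

lemma ext_integral_eq_integral:
  assumes "integrable M c"
  shows "ext_integral M c = ereal (integral\<^sup>L M c)"
proof -
  obtain r q where "(\<integral>\<^sup>+x. ennreal (c x) \<partial>M) = ennreal r" "(\<integral>\<^sup>+x. ennreal (- c x) \<partial>M) = ennreal q"
    "0 \<le> r" "0 \<le> q" "integral\<^sup>L M c = r - q"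
    using integrableE[OF assms] by metis
  then show ?thesis by (simp add: ext_integral_def)
qed

lemma ext_integral_mono_AE:
  assumes "AE x in M. c x \<le> h x"
  shows "ext_integral M c \<le> ext_integral M h"
proof -
  have "(\<integral>\<^sup>+x. ennreal (c x) \<partial>M) \<le> (\<integral>\<^sup>+x. ennreal (h x) \<partial>M)"
    and "(\<integral>\<^sup>+x. ennreal (- h x) \<partial>M) \<le> (\<integral>\<^sup>+x. ennreal (- c x) \<partial>M)"
    using assms by (auto intro!: nn_integral_mono_AE ennreal_leI elim!: eventually_mono)
  then show ?thesis
    unfolding ext_integral_def by (intro ereal_minus_mono) (auto simp: less_eq_ennreal.rep_eq)
qed

lemma ext_integral_cong_AE:
  "AE x in M. c x = h x \<Longrightarrow> ext_integral M c = ext_integral M h"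
  by (intro antisym ext_integral_mono_AE) (auto elim: eventually_mono)

lemma well_def_int_cong_AE:
  assumes "AE x in M. c x = h x" "h \<in> borel_measurable M" "well_def_int M c"
  shows "well_def_int M h"
proof -
  have "(\<integral>\<^sup>+x. ennreal (c x) \<partial>M) = (\<integral>\<^sup>+x. ennreal (h x) \<partial>M)"
    and "(\<integral>\<^sup>+x. ennreal (- c x) \<partial>M) = (\<integral>\<^sup>+x. ennreal (- h x) \<partial>M)"
    using assms(1) by (auto intro!: nn_integral_cong_AE elim: eventually_mono)
  with assms(2,3) show ?thesis unfolding well_def_int_def by auto
qed

lemma ext_integral_eq_PInf:
  "(\<integral>\<^sup>+x. ennreal (c x) \<partial>M) = \<infinity> \<Longrightarrow> (\<integral>\<^sup>+x. ennreal (- c x) \<partial>M) \<noteq> \<infinity> \<Longrightarrow>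
    ext_integral M c = \<infinity>"
  by (auto simp: ext_integral_def enn2ereal_eq_top_iff dest!: enn2ereal_cases)

lemma ext_integral_eq_MInf:
  "(\<integral>\<^sup>+x. ennreal (c x) \<partial>M) \<noteq> \<infinity> \<Longrightarrow> (\<integral>\<^sup>+x. ennreal (- c x) \<partial>M) = \<infinity> \<Longrightarrow>
    ext_integral M c = -\<infinity>"
  by (cases "enn2ereal (\<integral>\<^sup>+x. ennreal (c x) \<partial>M)") (auto simp: ext_integral_def enn2ereal_eq_top_iff)

lemma well_def_int_mono_AE:
  assumes c: "well_def_int M c" "ext_integral M c \<noteq> -\<infinity>"
    and "AE x in M. c x \<le> h x" "h \<in> borel_measurable M"
  shows "well_def_int M h"
proof -
  have "(\<integral>\<^sup>+x. ennreal (- c x) \<partial>M) \<noteq> \<infinity>"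
    using c ext_integral_eq_MInf[of M c] unfolding well_def_int_def by auto
  moreover have "(\<integral>\<^sup>+x. ennreal (- h x) \<partial>M) \<le> (\<integral>\<^sup>+x. ennreal (- c x) \<partial>M)"
    using assms(3) by (auto intro!: nn_integral_mono_AE ennreal_leI elim!: eventually_mono)
  ultimately show ?thesis using assms(4) unfolding well_def_int_def by (auto simp: top_unique)
qed

lemma nn_integral_pos_part_le_add:
  fixes c g :: "'a \<Rightarrow> real"
  assumes [measurable]: "c \<in> borel_measurable M" "g \<in> borel_measurable M"
  shows "(\<integral>\<^sup>+x. ennreal (c x) \<partial>M) \<le> (\<integral>\<^sup>+x. ennreal (c x + g x) \<partial>M) + (\<integral>\<^sup>+x. ennreal (- g x) \<partial>M)"
proof -
  have "(\<integral>\<^sup>+x. ennreal (c x) \<partial>M) \<le> (\<integral>\<^sup>+x. ennreal (c x + g x) + ennreal (- g x) \<partial>M)"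
  proof (intro nn_integral_mono)
    fix x
    have "ennreal (c x) \<le> ennreal (max 0 (c x + g x) + max 0 (- g x))"
      by (intro ennreal_leI) auto
    also have "\<dots> = ennreal (c x + g x) + ennreal (- g x)"
      by (simp add: ennreal_plus[symmetric] max_def ennreal_neg del: ennreal_plus)
    finally show "ennreal (c x) \<le> ennreal (c x + g x) + ennreal (- g x)" .
  qed
  also have "\<dots> = (\<integral>\<^sup>+x. ennreal (c x + g x) \<partial>M) + (\<integral>\<^sup>+x. ennreal (- g x) \<partial>M)"
    by (intro nn_integral_add) auto
  finally show ?thesis .
qed

lemma nn_integral_pos_part_add_integrable_eq_top_iff:
  assumes c[measurable]: "c \<in> borel_measurable M" and g: "integrable M g"
  shows "(\<integral>\<^sup>+x. ennreal (c x + g x) \<partial>M) = \<infinity> \<longleftrightarrow> (\<integral>\<^sup>+x. ennreal (c x) \<partial>M) = \<infinity>"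
proof -
  have [measurable]: "g \<in> borel_measurable M" using g by auto
  have "(\<integral>\<^sup>+x. ennreal (g x) \<partial>M) \<noteq> \<infinity>" "(\<integral>\<^sup>+x. ennreal (- g x) \<partial>M) \<noteq> \<infinity>"
    using g by auto
  moreover have "(\<integral>\<^sup>+x. ennreal (c x) \<partial>M) \<le>
      (\<integral>\<^sup>+x. ennreal (c x + g x) \<partial>M) + (\<integral>\<^sup>+x. ennreal (- g x) \<partial>M)"
    by (rule nn_integral_pos_part_le_add) auto
  moreover have "(\<integral>\<^sup>+x. ennreal (c x + g x) \<partial>M) \<le>
      (\<integral>\<^sup>+x. ennreal (c x) \<partial>M) + (\<integral>\<^sup>+x. ennreal (g x) \<partial>M)"
    using nn_integral_pos_part_le_add[of "\<lambda>x. c x + g x" M "\<lambda>x. - g x"] by simp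
  ultimately show ?thesis by (auto simp: top_unique ennreal_add_eq_top)
qed

lemma
  assumes c: "well_def_int M c" and g: "integrable M g"
  shows well_def_int_add_integrable: "well_def_int M (\<lambda>x. c x + g x)"
    and ext_integral_add_integrable:
      "ext_integral M (\<lambda>x. c x + g x) = ext_integral M c + ereal (integral\<^sup>L M g)"
proof -
  have [measurable]: "c \<in> borel_measurable M" "g \<in> borel_measurable M"
    using c g unfolding well_def_int_def by auto
  note pos = nn_integral_pos_part_add_integrable_eq_top_iff[of c M g]
  have neg: "(\<integral>\<^sup>+x. ennreal (- (c x + g x)) \<partial>M) = \<infinity> \<longleftrightarrow> (\<integral>\<^sup>+x. ennreal (- c x) \<partial>M) = \<infinity>"
    using nn_integral_pos_part_add_integrable_eq_top_iff[of "\<lambda>x. - c x" M "\<lambda>x. - g x"] g by simp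
  show "well_def_int M (\<lambda>x. c x + g x)" using c g pos neg unfolding well_def_int_def by auto
  show "ext_integral M (\<lambda>x. c x + g x) = ext_integral M c + ereal (integral\<^sup>L M g)"
  proof (cases "integrable M c")
    case True
    then show ?thesis using g by (simp add: ext_integral_eq_integral integral_add)
  next
    case False
    then consider
      "(\<integral>\<^sup>+x. ennreal (c x) \<partial>M) = \<infinity>" "(\<integral>\<^sup>+x. ennreal (- c x) \<partial>M) \<noteq> \<infinity>" |
      "(\<integral>\<^sup>+x. ennreal (c x) \<partial>M) \<noteq> \<infinity>" "(\<integral>\<^sup>+x. ennreal (- c x) \<partial>M) = \<infinity>"
      using c unfolding well_def_int_def real_integrable_def by auto
    then show ?thesis
    proof cases
      case 1
      then show ?thesis
        using g pos neg ext_integral_eq_PInf[of M "\<lambda>x. c x + g x"] by (simp add: ext_integral_eq_PInf)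
    next
      case 2
      then show ?thesis
        using g pos neg ext_integral_eq_MInf[of M "\<lambda>x. c x + g x"] by (simp add: ext_integral_eq_MInf)
    qed
  qed
qed

lemma (in prob_space)
  assumes "well_def_int M c"
  shows well_def_int_add_const: "well_def_int M (\<lambda>x. c x + a)"
    and ext_integral_add_const: "ext_integral M (\<lambda>x. c x + a) = ext_integral M c + ereal a"
  using well_def_int_add_integrable[OF assms, of "\<lambda>_. a"]
    ext_integral_add_integrable[OF assms, of "\<lambda>_. a"] by (simp_all add: prob_space)

lemma (in prob_space) nn_integral_exp_pos:
  assumes "g \<in> borel_measurable M"
  shows "0 < (\<integral>\<^sup>+x. ennreal (exp (g x)) \<partial>M)"
proof (rule ccontr)
  assume "\<not> ?thesis"
  then have "(\<integral>\<^sup>+x. ennreal (exp (g x)) \<partial>M) = 0" by (simp add: not_less)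
  then have "AE x in M. ennreal (exp (g x)) = 0"
    using assms by (subst (asm) nn_integral_0_iff_AE) auto
  then show False by (simp add: AE_False)
qed

lemma nn_integral_exp_minus_ln_eq_1:
  assumes "d \<in> borel_measurable M" "(\<integral>\<^sup>+x. ennreal (exp (d x)) \<partial>M) = ennreal k" "0 < k"
  shows "(\<integral>\<^sup>+x. ennreal (exp (d x - ln k)) \<partial>M) = 1"
proof -
  have "(\<integral>\<^sup>+x. ennreal (exp (d x - ln k)) \<partial>M) = (\<integral>\<^sup>+x. ennreal (exp (d x)) * ennreal (1 / k) \<partial>M)"
    using assms(3) by (intro nn_integral_cong) (simp add: exp_diff ennreal_mult[symmetric] field_simps)
  also have "\<dots> = ennreal k * ennreal (1 / k)"
    using assms(1,2) by (subst nn_integral_multc) auto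
  finally show ?thesis using assms(3) by (simp add: ennreal_mult[symmetric])
qed

lemma ennreal_pos_le_obtain:
  assumes "0 < z" "z \<le> ennreal B"
  obtains k where "z = ennreal k" "0 < k" "k \<le> B"
  using assms by (cases z) (auto simp: ennreal_le_iff2 top_unique)

section \<open>The suprema defining S and H\<close>

definition S_feasible :: "'a measure \<Rightarrow> 'a measure \<Rightarrow> ('a \<Rightarrow> real) set" where
  "S_feasible \<rho> P = {c. well_def_int P c \<and> (\<integral>\<^sup>+x. ennreal (exp (c x)) \<partial>\<rho>) = 1}"

definition S_sup :: "'a measure \<Rightarrow> 'a measure \<Rightarrow> ereal" where
  "S_sup \<rho> P = (SUP c \<in> S_feasible \<rho> P. ext_integral P c)"

definition H_feasible :: "'a measure \<Rightarrow> 'b measure \<Rightarrow> ('a \<times> 'b) measure \<Rightarrow> ('a \<times> 'b \<Rightarrow> real) set"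
  where "H_feasible \<rho> MY \<pi> = {c. well_def_int \<pi> c \<and>
    (\<forall>y\<in>space MY. (\<integral>\<^sup>+x. ennreal (exp (c (x, y))) \<partial>\<rho>) = 1)}"

definition H_sup :: "'a measure \<Rightarrow> 'b measure \<Rightarrow> ('a \<times> 'b) measure \<Rightarrow> ereal" where
  "H_sup \<rho> MY \<pi> = (SUP c \<in> H_feasible \<rho> MY \<pi>. ext_integral \<pi> c)"

lemma S_ent_eq_uminus_S_sup: "S_ent \<rho> P = - S_sup \<rho> P"
  unfolding S_ent_def S_sup_def S_feasible_def by simp

lemma H_ent_eq_uminus_H_sup: "H_ent \<rho> MY \<pi> = - H_sup \<rho> MY \<pi>"
  unfolding H_ent_def H_sup_def H_feasible_def by simp

lemma ext_integral_le_S_sup: "c \<in> S_feasible \<rho> P \<Longrightarrow> ext_integral P c \<le> S_sup \<rho> P"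
  unfolding S_sup_def by (rule SUP_upper)

lemma ext_integral_le_H_sup: "c \<in> H_feasible \<rho> MY \<pi> \<Longrightarrow> ext_integral \<pi> c \<le> H_sup \<rho> MY \<pi>"
  unfolding H_sup_def by (rule SUP_upper)

lemma S_sup_nonneg:
  assumes "prob_space \<rho>" "prob_space P"
  shows "0 \<le> S_sup \<rho> P"
proof -
  have "(\<lambda>_. 0) \<in> S_feasible \<rho> P"
    using assms by (simp add: S_feasible_def well_def_int_def prob_space.emeasure_space_1)
  from ext_integral_le_S_sup[OF this] show ?thesis by (simp add: ext_integral_def)
qed

lemma ext_integral_le_S_sup_plus_ln:
  assumes "prob_space P" "sets \<rho> = sets P" "well_def_int P d"
    and "0 < (\<integral>\<^sup>+x. ennreal (exp (d x)) \<partial>\<rho>)" "(\<integral>\<^sup>+x. ennreal (exp (d x)) \<partial>\<rho>) \<le> ennreal B"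
  shows "ext_integral P d \<le> S_sup \<rho> P + ereal (ln B)"
proof -
  interpret prob_space P by fact
  obtain k where k: "(\<integral>\<^sup>+x. ennreal (exp (d x)) \<partial>\<rho>) = ennreal k" "0 < k" "k \<le> B"
    using assms(4,5) by (rule ennreal_pos_le_obtain)
  have "d \<in> borel_measurable \<rho>"
    using assms(3) by (simp add: well_def_int_def measurable_cong_sets[OF assms(2) refl])
  then have "(\<lambda>x. d x + - ln k) \<in> S_feasible \<rho> P"
    using nn_integral_exp_minus_ln_eq_1[OF _ k(1,2)] well_def_int_add_const[OF assms(3), of "- ln k"]
    by (simp add: S_feasible_def)
  from ext_integral_le_S_sup[OF this] have "ext_integral P d + ereal (- ln k) \<le> S_sup \<rho> P"
    using ext_integral_add_const[OF assms(3), of "- ln k"] by simp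
  then have "ext_integral P d \<le> S_sup \<rho> P + ereal (ln k)"
    by (cases "ext_integral P d"; cases "S_sup \<rho> P") auto
  also have "\<dots> \<le> S_sup \<rho> P + ereal (ln B)" using k by (intro add_left_mono) auto
  finally show ?thesis .
qed

lemma borel_measurable_nn_integral_exp_section:
  assumes "prob_space \<rho>" "sets \<rho> = sets MX" and [measurable]: "c \<in> borel_measurable (MX \<Otimes>\<^sub>M MY)"
  shows "(\<lambda>y. \<integral>\<^sup>+x. ennreal (exp (c (x, y))) \<partial>\<rho>) \<in> borel_measurable MY"
proof -
  have "(\<lambda>(y, x). ennreal (exp (c (x, y)))) \<in> borel_measurable (MY \<Otimes>\<^sub>M MX)"
    by measurable
  then have "(\<lambda>(y, x). ennreal (exp (c (x, y)))) \<in> borel_measurable (MY \<Otimes>\<^sub>M \<rho>)"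
    by (simp add: measurable_cong_sets[OF sets_pair_measure_cong[OF refl assms(2)] refl])
  then show ?thesis by (rule sigma_finite_measure.borel_measurable_nn_integral[OF prob_space_imp_sigma_finite[OF assms(1)]])
qed

lemma ext_integral_le_H_sup_plus_ln_measurable_partition:
  assumes \<pi>: "prob_space \<pi>" "sets \<pi> = sets (MX \<Otimes>\<^sub>M MY)" and \<rho>: "sets \<rho> = sets MX"
    and c: "well_def_int \<pi> c" "ext_integral \<pi> c \<noteq> -\<infinity>"
    and [measurable]: "k \<in> borel_measurable MY"
    and k: "\<And>y. y \<in> space MY \<Longrightarrow>
      (\<integral>\<^sup>+x. ennreal (exp (c (x, y))) \<partial>\<rho>) = ennreal (k y) \<and> 0 < k y \<and> k y \<le> B"
  shows "ext_integral \<pi> c \<le> H_sup \<rho> MY \<pi> + ereal (ln B)"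
proof -
  interpret \<pi>: prob_space \<pi> by fact
  have [measurable]: "c \<in> borel_measurable (MX \<Otimes>\<^sub>M MY)"
    using c by (simp add: well_def_int_def measurable_cong_sets[OF \<pi>(2) refl])
  define c' where "c' z = c z - ln (k (snd z))" for z
  have c'_ge: "c z + - ln B \<le> c' z" if "z \<in> space \<pi>" for z
  proof -
    have "space \<pi> = space MX \<times> space MY"
      using sets_eq_imp_space_eq[OF \<pi>(2)] by (simp add: space_pair_measure)
    with that have "snd z \<in> space MY" by (simp add: mem_Times_iff)
    then have "ln (k (snd z)) \<le> ln B" using k[of "snd z"] by simp
    then show ?thesis unfolding c'_def by simp
  qed
  have "well_def_int \<pi> c'"
  proof (rule well_def_int_mono_AE[OF \<pi>.well_def_int_add_const[OF c(1)]])
    show "ext_integral \<pi> (\<lambda>z. c z + - ln B) \<noteq> -\<infinity>"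
      using c(2) \<pi>.ext_integral_add_const[OF c(1), of "- ln B"] by simp
    show "c' \<in> borel_measurable \<pi>"
      unfolding c'_def measurable_cong_sets[OF \<pi>(2) refl] by measurable
  qed (intro AE_I2 c'_ge)
  moreover have "(\<integral>\<^sup>+x. ennreal (exp (c' (x, y))) \<partial>\<rho>) = 1" if y: "y \<in> space MY" for y
  proof -
    have "(\<lambda>x. c (x, y)) \<in> borel_measurable \<rho>"
      using y by (simp add: measurable_cong_sets[OF \<rho> refl])
    then show ?thesis
      unfolding c'_def snd_conv using k[OF y] by (intro nn_integral_exp_minus_ln_eq_1) auto
  qed
  ultimately have "ext_integral \<pi> c' \<le> H_sup \<rho> MY \<pi>"
    by (intro ext_integral_le_H_sup) (simp add: H_feasible_def)
  moreover have "ext_integral \<pi> c + ereal (- ln B) \<le> ext_integral \<pi> c'"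
    unfolding \<pi>.ext_integral_add_const[OF c(1), symmetric] by (intro ext_integral_mono_AE AE_I2 c'_ge)
  ultimately have "ext_integral \<pi> c + ereal (- ln B) \<le> H_sup \<rho> MY \<pi>"
    by order
  then show ?thesis
    by (cases "ext_integral \<pi> c"; cases "H_sup \<rho> MY \<pi>") auto
qed

lemma ext_integral_le_H_sup_plus_ln:
  assumes \<pi>: "prob_space \<pi>" "sets \<pi> = sets (MX \<Otimes>\<^sub>M MY)" and \<rho>: "prob_space \<rho>" "sets \<rho> = sets MX"
    and c: "well_def_int \<pi> c"
    and bounds: "\<And>y. y \<in> space MY \<Longrightarrow>
      0 < (\<integral>\<^sup>+x. ennreal (exp (c (x, y))) \<partial>\<rho>) \<and> (\<integral>\<^sup>+x. ennreal (exp (c (x, y))) \<partial>\<rho>) \<le> ennreal B"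
  shows "ext_integral \<pi> c \<le> H_sup \<rho> MY \<pi> + ereal (ln B)"
proof (cases "ext_integral \<pi> c = -\<infinity>")
  case False
  have [measurable]: "c \<in> borel_measurable (MX \<Otimes>\<^sub>M MY)"
    using c by (simp add: well_def_int_def measurable_cong_sets[OF \<pi>(2) refl])
  define k where "k y = enn2real (\<integral>\<^sup>+x. ennreal (exp (c (x, y))) \<partial>\<rho>)" for y
  have "k \<in> borel_measurable MY"
    unfolding k_def using borel_measurable_nn_integral_exp_section[OF \<rho>] by measurable
  moreover have "(\<integral>\<^sup>+x. ennreal (exp (c (x, y))) \<partial>\<rho>) = ennreal (k y) \<and> 0 < k y \<and> k y \<le> B"
    if y: "y \<in> space MY" for y
  proof -
    obtain r where "(\<integral>\<^sup>+x. ennreal (exp (c (x, y))) \<partial>\<rho>) = ennreal r" "0 < r" "r \<le> B"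
      using bounds[OF y] by (metis ennreal_pos_le_obtain)
    then show ?thesis by (simp add: k_def)
  qed
  ultimately show ?thesis
    using False by (intro ext_integral_le_H_sup_plus_ln_measurable_partition[OF \<pi> \<rho>(2) c]) auto
qed simp

section \<open>Densities\<close>

lemma absolutely_continuous_if_S_sup_finite:
  assumes \<nu>: "prob_space \<nu>" and P: "prob_space P" and sets: "sets P = sets \<nu>"
    and fin: "S_sup \<nu> P \<noteq> \<infinity>"
  shows "absolutely_continuous \<nu> P"
  unfolding absolutely_continuous_def
proof
  interpret P: prob_space P by fact
  interpret \<nu>: prob_space \<nu> by fact
  fix A assume A: "A \<in> null_sets \<nu>"
  then have A_sets: "A \<in> sets P" using sets by (auto simp: null_sets_def)
  have "ereal (t * measure P A) \<le> S_sup \<nu> P" for t :: real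
  proof -
    define d :: "'a \<Rightarrow> real" where "d = (\<lambda>x. t * indicator A x)"
    have "integrable P d"
      unfolding d_def using A_sets by (auto intro!: integrable_real_indicator simp: less_top[symmetric])
    moreover have "integral\<^sup>L P d = t * measure P A"
      using A_sets by (simp add: d_def)
    ultimately have "well_def_int P d" and "ext_integral P d = ereal (t * measure P A)"
      by (auto simp: real_integrable_def well_def_int_def ext_integral_eq_integral)
    moreover have "(\<integral>\<^sup>+x. ennreal (exp (d x)) \<partial>\<nu>) = 1"
    proof -
      have "AE x in \<nu>. ennreal (exp (d x)) = 1"
        using AE_not_in[OF A] by eventually_elim (simp add: d_def)
      then have "(\<integral>\<^sup>+x. ennreal (exp (d x)) \<partial>\<nu>) = (\<integral>\<^sup>+x. 1 \<partial>\<nu>)"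
        by (rule nn_integral_cong_AE)
      then show ?thesis by (simp add: \<nu>.emeasure_space_1)
    qed
    ultimately show ?thesis using ext_integral_le_S_sup[of d \<nu> P] by (simp add: S_feasible_def)
  qed
  then obtain r where r: "\<And>t. t * measure P A \<le> r"
    using fin S_sup_nonneg[OF \<nu> P] by (cases "S_sup \<nu> P") auto
  have "measure P A \<le> 0"
  proof (rule ccontr)
    assume "\<not> measure P A \<le> 0"
    with r[of "(r + 1) / measure P A"] show False by simp
  qed
  then show "A \<in> null_sets P"
    using A_sets by (simp add: null_sets_def P.emeasure_eq_measure measure_le_0_iff)
qed

lemma density_if_S_sup_finite:
  assumes "prob_space \<nu>" "prob_space P" "sets P = sets \<nu>" "S_sup \<nu> P \<noteq> \<infinity>"
  obtains f where "f \<in> borel_measurable \<nu>" "\<And>x. 0 \<le> f x" "P = density \<nu> (\<lambda>x. ennreal (f x))"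
proof -
  interpret \<nu>: prob_space \<nu> by fact
  have ac: "absolutely_continuous \<nu> P"
    using assms by (rule absolutely_continuous_if_S_sup_finite)
  obtain f where f: "f \<in> borel_measurable \<nu>" "AE x in \<nu>. RN_deriv \<nu> P x = ennreal (f x)" "\<And>x. 0 \<le> f x"
    using \<nu>.real_RN_deriv[OF prob_space.finite_measure[OF assms(2)] ac assms(3)] by metis
  have "P = density \<nu> (RN_deriv \<nu> P)"
    using \<nu>.density_RN_deriv[OF ac assms(3)] by simp
  also have "\<dots> = density \<nu> (\<lambda>x. ennreal (f x))"
    using f by (intro density_cong) auto
  finally show ?thesis using f that by blast
qed

lemma ennreal_mult_neg_ln_le_1:
  fixes t :: real
  assumes "0 \<le> t"
  shows "ennreal t * ennreal (- ln t) \<le> 1"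
proof (cases "0 < t \<and> t < 1")
  case True
  have "ln (1 / t) \<le> 1 / t - 1" using True by (intro ln_le_minus_one) auto
  then have "t * - ln t \<le> 1 - t" using True by (simp add: ln_div field_simps)
  then show ?thesis using True by (simp add: ennreal_mult[symmetric] ennreal_le_1)
next
  case False
  with assms have "ln t \<ge> 0" by auto
  then show ?thesis by (simp add: ennreal_neg)
qed

text \<open>Since ln 0 = 0 in Isabelle and f > 0 P-almost everywhere, ln \<circ> f is the log-density
  of P P-almost everywhere.\<close>
locale prob_density =
  fixes \<nu> P :: "'a measure" and f :: "'a \<Rightarrow> real"
  assumes prob_space_nu: "prob_space \<nu>" and prob_space_P: "prob_space P"
    and f_measurable[measurable]: "f \<in> borel_measurable \<nu>"
    and f_nonneg: "\<And>x. 0 \<le> f x"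
    and P_eq_density: "P = density \<nu> (\<lambda>x. ennreal (f x))"
    and S_sup_finite: "S_sup \<nu> P \<noteq> \<infinity>"
begin

sublocale \<nu>: prob_space \<nu> by (fact prob_space_nu)
sublocale P: prob_space P by (fact prob_space_P)

lemma sets_P: "sets P = sets \<nu>"
  by (simp add: P_eq_density)

lemma measurable_P_eq: "measurable P = measurable \<nu>"
  by (intro ext measurable_cong_sets sets_P refl)

lemma nn_integral_P: "g \<in> borel_measurable \<nu> \<Longrightarrow> integral\<^sup>N P g = (\<integral>\<^sup>+x. ennreal (f x) * g x \<partial>\<nu>)"
  unfolding P_eq_density by (rule nn_integral_density) auto

lemma AE_P_density_pos: "AE x in P. 0 < f x"
  unfolding P_eq_density by (subst AE_density) auto

lemma nn_integral_exp_le_1_plus: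
  assumes [measurable]: "d \<in> borel_measurable \<nu>" "g \<in> borel_measurable \<nu>"
    and g: "\<And>x. 0 \<le> g x" "(\<integral>\<^sup>+x. ennreal (g x) \<partial>P) = 1"
    and e: "0 \<le> e" and bound: "\<And>x. exp (d x) \<le> f x * g x + e"
  shows "(\<integral>\<^sup>+x. ennreal (exp (d x)) \<partial>\<nu>) \<le> ennreal (1 + e)"
proof -
  have "(\<integral>\<^sup>+x. ennreal (exp (d x)) \<partial>\<nu>) \<le> (\<integral>\<^sup>+x. ennreal (f x) * ennreal (g x) + ennreal e \<partial>\<nu>)"
    using bound f_nonneg g(1) e
    by (intro nn_integral_mono) (simp add: ennreal_mult[symmetric] ennreal_plus[symmetric] del: ennreal_plus)
  also have "\<dots> = (\<integral>\<^sup>+x. ennreal (g x) \<partial>P) + ennreal e"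
    by (simp add: nn_integral_add nn_integral_P \<nu>.emeasure_space_1)
  finally show ?thesis using g(2) e by simp
qed

lemma nn_integral_neg_ln_density_le_1: "(\<integral>\<^sup>+x. ennreal (- ln (f x)) \<partial>P) \<le> 1"
proof -
  have "(\<integral>\<^sup>+x. ennreal (- ln (f x)) \<partial>P) = (\<integral>\<^sup>+x. ennreal (f x) * ennreal (- ln (f x)) \<partial>\<nu>)"
    by (rule nn_integral_P) measurable
  also have "\<dots> \<le> (\<integral>\<^sup>+x. 1 \<partial>\<nu>)"
    using f_nonneg by (intro nn_integral_mono ennreal_mult_neg_ln_le_1)
  finally show ?thesis by (simp add: \<nu>.emeasure_space_1)
qed

lemma integrable_ln_density: "integrable P (\<lambda>x. ln (f x))"
proof -
  have neg: "(\<integral>\<^sup>+x. ennreal (- ln (f x)) \<partial>P) \<noteq> \<infinity>"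
    using nn_integral_neg_ln_density_le_1 by (auto simp: top_unique)
  then have wd: "well_def_int P (\<lambda>x. ln (f x))"
    by (simp add: well_def_int_def measurable_P_eq)
  have "exp (ln (f x)) \<le> f x * 1 + 1" for x
    using f_nonneg[of x] by (cases "f x = 0") auto
  then have "(\<integral>\<^sup>+x. ennreal (exp (ln (f x))) \<partial>\<nu>) \<le> ennreal (1 + 1)"
    by (intro nn_integral_exp_le_1_plus[where g = "\<lambda>_. 1"]) (auto simp: P.emeasure_space_1)
  then have "ext_integral P (\<lambda>x. ln (f x)) \<le> S_sup \<nu> P + ereal (ln 2)"
    using \<nu>.nn_integral_exp_pos[of "\<lambda>x. ln (f x)"]
    by (intro ext_integral_le_S_sup_plus_ln[OF prob_space_P _ wd]) (auto simp: sets_P)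
  with S_sup_finite have "ext_integral P (\<lambda>x. ln (f x)) \<noteq> \<infinity>" by auto
  with neg have "(\<integral>\<^sup>+x. ennreal (ln (f x)) \<partial>P) \<noteq> \<infinity>"
    using ext_integral_eq_PInf[of P "\<lambda>x. ln (f x)"] by blast
  with neg show ?thesis by (simp add: real_integrable_def measurable_P_eq)
qed

text \<open>No case split on f x = 0 is needed below: there exp (d x) / f x = 0.\<close>
lemma integral_exp_div_density_le_1:
  assumes [measurable]: "d \<in> borel_measurable \<nu>"
    and "(\<integral>\<^sup>+x. ennreal (exp (d x)) \<partial>\<nu>) = 1"
  shows "integrable P (\<lambda>x. exp (d x) / f x)" "(\<integral>x. exp (d x) / f x \<partial>P) \<le> 1"
proof -
  have "(\<integral>\<^sup>+x. ennreal (exp (d x) / f x) \<partial>P) = (\<integral>\<^sup>+x. ennreal (f x) * ennreal (exp (d x) / f x) \<partial>\<nu>)"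
    by (intro nn_integral_P) measurable
  also have "\<dots> \<le> (\<integral>\<^sup>+x. ennreal (exp (d x)) \<partial>\<nu>)"
    using f_nonneg by (intro nn_integral_mono) (simp add: ennreal_mult[symmetric])
  finally have le: "(\<integral>\<^sup>+x. ennreal (exp (d x) / f x) \<partial>P) \<le> 1"
    using assms(2) by simp
  then show int: "integrable P (\<lambda>x. exp (d x) / f x)"
    using f_nonneg by (intro integrableI_nonneg) (auto simp: measurable_P_eq top_unique intro: le_less_trans)
  show "(\<integral>x. exp (d x) / f x \<partial>P) \<le> 1"
    using le f_nonneg by (subst (asm) nn_integral_eq_integral[OF int]) (auto simp: ennreal_le_1)
qed

lemma S_sup_le_integral_ln_density: "S_sup \<nu> P \<le> ereal (\<integral>x. ln (f x) \<partial>P)"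
  unfolding S_sup_def
proof (rule SUP_least)
  fix d assume "d \<in> S_feasible \<nu> P"
  then have d: "well_def_int P d" "(\<integral>\<^sup>+x. ennreal (exp (d x)) \<partial>\<nu>) = 1"
    by (auto simp: S_feasible_def)
  then have [measurable]: "d \<in> borel_measurable \<nu>"
    by (simp add: well_def_int_def measurable_P_eq)
  define h where "h = (\<lambda>x. ln (f x) + exp (d x) / f x - 1)"
  have h_int: "integrable P h"
    unfolding h_def using integrable_ln_density integral_exp_div_density_le_1[OF _ d(2)] by auto
  have "AE x in P. d x \<le> h x"
    using AE_P_density_pos
  proof eventually_elim
    fix x assume "0 < f x"
    then have "1 + (d x - ln (f x)) \<le> exp (d x) / f x"
      using exp_ge_add_one_self[of "d x - ln (f x)"] by (simp add: exp_diff)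
    then show "d x \<le> h x" by (simp add: h_def)
  qed
  then have "ext_integral P d \<le> ereal (integral\<^sup>L P h)"
    using ext_integral_mono_AE ext_integral_eq_integral[OF h_int] by metis
  also have "integral\<^sup>L P h \<le> (\<integral>x. ln (f x) \<partial>P)"
    using integrable_ln_density integral_exp_div_density_le_1[OF _ d(2)]
    by (simp add: h_def integral_diff integral_add P.prob_space)
  finally show "ext_integral P d \<le> ereal (\<integral>x. ln (f x) \<partial>P)" by simp
qed

lemma integral_ln_density_le_S_sup: "ereal (\<integral>x. ln (f x) \<partial>P) \<le> S_sup \<nu> P"
proof (rule ereal_le_epsilon2)
  fix e :: real assume e: "0 < e"
  define d where "d x = (if 0 < f x then ln (f x) else ln e)" for x
  have [measurable]: "d \<in> borel_measurable \<nu>" unfolding d_def by measurable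
  have ae: "AE x in P. ln (f x) = d x"
    using AE_P_density_pos by eventually_elim (simp add: d_def)
  have wd: "well_def_int P d"
    using integrable_ln_density by (intro well_def_int_cong_AE[OF ae])
      (auto simp: measurable_P_eq well_def_int_def real_integrable_def)
  have "exp (d x) \<le> f x * 1 + e" for x
    using e f_nonneg[of x] by (simp add: d_def)
  then have "(\<integral>\<^sup>+x. ennreal (exp (d x)) \<partial>\<nu>) \<le> ennreal (1 + e)"
    using e by (intro nn_integral_exp_le_1_plus[where g = "\<lambda>_. 1"]) (auto simp: P.emeasure_space_1)
  then have "ext_integral P d \<le> S_sup \<nu> P + ereal (ln (1 + e))"
    using \<nu>.nn_integral_exp_pos[of d]
    by (intro ext_integral_le_S_sup_plus_ln[OF prob_space_P _ wd]) (auto simp: sets_P)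
  also have "\<dots> \<le> S_sup \<nu> P + ereal e"
    using e ln_add_one_self_le_self[of e] by (intro add_left_mono) auto
  finally show "ereal (\<integral>x. ln (f x) \<partial>P) \<le> S_sup \<nu> P + ereal e"
    using ext_integral_cong_AE[OF ae] ext_integral_eq_integral[OF integrable_ln_density] by simp
qed

lemma S_sup_eq_integral_ln_density: "S_sup \<nu> P = ereal (\<integral>x. ln (f x) \<partial>P)"
  using S_sup_le_integral_ln_density integral_ln_density_le_S_sup by (rule antisym)

end

locale prob_density_coupling = prob_density \<nu> P f
  for \<nu> P :: "'a measure" and f :: "'a \<Rightarrow> real" +
  fixes MX :: "'a measure" and MY :: "'b measure" and \<pi> :: "('a \<times> 'b) measure"
  assumes sets_nu: "sets \<nu> = sets MX" and prob_space_pi: "prob_space \<pi>"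
    and sets_pi: "sets \<pi> = sets (MX \<Otimes>\<^sub>M MY)" and marginal: "distr \<pi> MX fst = P"
begin

sublocale \<pi>: prob_space \<pi> by (fact prob_space_pi)

lemma measurable_nu_eq: "measurable \<nu> = measurable MX"
  by (intro ext measurable_cong_sets sets_nu refl)

lemma measurable_pi_eq: "measurable \<pi> = measurable (MX \<Otimes>\<^sub>M MY)"
  by (intro ext measurable_cong_sets sets_pi refl)

lemma f_measurable_MX[measurable]: "f \<in> borel_measurable MX"
  using f_measurable by (simp add: measurable_nu_eq)

lemma measurable_fst_pi[measurable]: "fst \<in> measurable \<pi> MX"
  by (simp add: measurable_pi_eq)

lemma sets_P_eq: "sets P = sets MX"
  by (simp add: sets_P sets_nu)

lemma AE_pi_fst:
  assumes "AE x in P. Q x" shows "AE z in \<pi>. Q (fst z)"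
  using assms unfolding marginal[symmetric] by (rule AE_distrD[OF measurable_fst_pi])

lemma
  shows integrable_ln_density_fst: "integrable \<pi> (\<lambda>z. ln (f (fst z)))"
    and integral_ln_density_fst: "(\<integral>z. ln (f (fst z)) \<partial>\<pi>) = (\<integral>x. ln (f x) \<partial>P)"
  using integrable_distr_eq[OF measurable_fst_pi, of "\<lambda>x. ln (f x)"]
    integral_distr[OF measurable_fst_pi, of "\<lambda>x. ln (f x)"] integrable_ln_density
  by (simp_all add: marginal)

lemma H_sup_le_H_sup_P_plus_integral_ln_density:
  "H_sup \<nu> MY \<pi> \<le> H_sup P MY \<pi> + ereal (\<integral>x. ln (f x) \<partial>P)"
  unfolding H_sup_def[of \<nu>]
proof (rule SUP_least)
  fix c assume "c \<in> H_feasible \<nu> MY \<pi>"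
  then have c: "well_def_int \<pi> c"
    and norm: "\<And>y. y \<in> space MY \<Longrightarrow> (\<integral>\<^sup>+x. ennreal (exp (c (x, y))) \<partial>\<nu>) = 1"
    by (auto simp: H_feasible_def)
  have [measurable]: "c \<in> borel_measurable (MX \<Otimes>\<^sub>M MY)"
    using c by (simp add: well_def_int_def measurable_pi_eq)
  define c' where "c' = (\<lambda>z. c z + - ln (f (fst z)))"
  have c': "well_def_int \<pi> c'" "ext_integral \<pi> c' = ext_integral \<pi> c - ereal (\<integral>x. ln (f x) \<partial>P)"
    using well_def_int_add_integrable[OF c, of "\<lambda>z. - ln (f (fst z))"]
      ext_integral_add_integrable[OF c, of "\<lambda>z. - ln (f (fst z))"]
      integrable_ln_density_fst integral_ln_density_fst
    by (auto simp: c'_def minus_ereal_def)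
  have "ext_integral \<pi> c' \<le> H_sup P MY \<pi> + ereal (ln 1)"
  proof (rule ext_integral_le_H_sup_plus_ln[OF prob_space_pi sets_pi prob_space_P sets_P_eq c'(1)])
    fix y assume y: "y \<in> space MY"
    have [measurable]: "(\<lambda>x. c (x, y)) \<in> borel_measurable \<nu>"
      using y by (simp add: measurable_nu_eq)
    have "(\<integral>\<^sup>+x. ennreal (exp (c' (x, y))) \<partial>P) = (\<integral>\<^sup>+x. ennreal (f x) * ennreal (exp (c' (x, y))) \<partial>\<nu>)"
      unfolding c'_def fst_conv by (intro nn_integral_P) measurable
    also have "\<dots> \<le> (\<integral>\<^sup>+x. ennreal (exp (c (x, y))) \<partial>\<nu>)"
    proof (intro nn_integral_mono)
      fix x
      show "ennreal (f x) * ennreal (exp (c' (x, y))) \<le> ennreal (exp (c (x, y)))"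
        using f_nonneg[of x] by (cases "f x = 0") (auto simp: c'_def ennreal_mult[symmetric] exp_diff)
    qed
    finally show "0 < (\<integral>\<^sup>+x. ennreal (exp (c' (x, y))) \<partial>P) \<and>
        (\<integral>\<^sup>+x. ennreal (exp (c' (x, y))) \<partial>P) \<le> ennreal 1"
      using norm[OF y] P.nn_integral_exp_pos[of "\<lambda>x. c' (x, y)"]
      by (auto simp: c'_def measurable_P_eq)
  qed
  then show "ext_integral \<pi> c \<le> H_sup P MY \<pi> + ereal (\<integral>x. ln (f x) \<partial>P)"
    using c'(2) by (cases "ext_integral \<pi> c"; cases "H_sup P MY \<pi>") auto
qed

text \<open>Where f vanishes the shifted potential is replaced by the constant ln e: this keeps it
  finite and costs at most e in the normalisation constant.\<close>
lemma ext_integral_plus_integral_ln_density_le: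
  assumes "c \<in> H_feasible P MY \<pi>" and e: "0 < e"
  shows "ext_integral \<pi> c + ereal (\<integral>x. ln (f x) \<partial>P) \<le> H_sup \<nu> MY \<pi> + ereal e"
proof -
  have c: "well_def_int \<pi> c"
    and norm: "\<And>y. y \<in> space MY \<Longrightarrow> (\<integral>\<^sup>+x. ennreal (exp (c (x, y))) \<partial>P) = 1"
    using assms(1) by (auto simp: H_feasible_def)
  have [measurable]: "c \<in> borel_measurable (MX \<Otimes>\<^sub>M MY)"
    using c by (simp add: well_def_int_def measurable_pi_eq)
  define c' where "c' = (\<lambda>z. if 0 < f (fst z) then c z + ln (f (fst z)) else ln e)"
  have ae: "AE z in \<pi>. c z + ln (f (fst z)) = c' z"
    using AE_pi_fst[OF AE_P_density_pos] by eventually_elim (simp add: c'_def)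
  have "well_def_int \<pi> c'"
    by (rule well_def_int_cong_AE[OF ae _ well_def_int_add_integrable[OF c integrable_ln_density_fst]])
      (simp add: c'_def measurable_pi_eq)
  moreover have "ext_integral \<pi> c' = ext_integral \<pi> c + ereal (\<integral>x. ln (f x) \<partial>P)"
    using ext_integral_cong_AE[OF ae] ext_integral_add_integrable[OF c integrable_ln_density_fst]
    by (simp add: integral_ln_density_fst)
  moreover have "ext_integral \<pi> c' \<le> H_sup \<nu> MY \<pi> + ereal (ln (1 + e))"
  proof (rule ext_integral_le_H_sup_plus_ln[OF prob_space_pi sets_pi prob_space_nu sets_nu \<open>well_def_int \<pi> c'\<close>])
    fix y assume y: "y \<in> space MY"
    have [measurable]: "(\<lambda>x. c (x, y)) \<in> borel_measurable \<nu>"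
      using y by (simp add: measurable_nu_eq)
    have [measurable]: "(\<lambda>x. c' (x, y)) \<in> borel_measurable \<nu>"
      unfolding c'_def fst_conv by measurable
    have "exp (c' (x, y)) \<le> f x * exp (c (x, y)) + e" for x
      using e f_nonneg[of x] by (auto simp: c'_def exp_add)
    then have "(\<integral>\<^sup>+x. ennreal (exp (c' (x, y))) \<partial>\<nu>) \<le> ennreal (1 + e)"
      using e norm[OF y] by (intro nn_integral_exp_le_1_plus) auto
    then show "0 < (\<integral>\<^sup>+x. ennreal (exp (c' (x, y))) \<partial>\<nu>) \<and>
        (\<integral>\<^sup>+x. ennreal (exp (c' (x, y))) \<partial>\<nu>) \<le> ennreal (1 + e)"
      using \<nu>.nn_integral_exp_pos[of "\<lambda>x. c' (x, y)"] by simp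
  qed
  moreover have "ereal (ln (1 + e)) \<le> ereal e"
    using e ln_add_one_self_le_self[of e] by simp
  ultimately show ?thesis
    by (metis add_left_mono order_trans)
qed

lemma H_sup_P_plus_integral_ln_density_le_H_sup:
  "H_sup P MY \<pi> + ereal (\<integral>x. ln (f x) \<partial>P) \<le> H_sup \<nu> MY \<pi>"
proof -
  have "ext_integral \<pi> c \<le> H_sup \<nu> MY \<pi> - ereal (\<integral>x. ln (f x) \<partial>P)" if "c \<in> H_feasible P MY \<pi>" for c
    using ereal_le_epsilon2[OF ext_integral_plus_integral_ln_density_le[OF that]]
    by (cases "ext_integral \<pi> c"; cases "H_sup \<nu> MY \<pi>") auto
  then have "H_sup P MY \<pi> \<le> H_sup \<nu> MY \<pi> - ereal (\<integral>x. ln (f x) \<partial>P)"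
    unfolding H_sup_def[of P] by (rule SUP_least)
  then show ?thesis by (cases "H_sup P MY \<pi>"; cases "H_sup \<nu> MY \<pi>") auto
qed

lemma H_sup_eq_H_sup_P_plus_integral_ln_density:
  "H_sup \<nu> MY \<pi> = H_sup P MY \<pi> + ereal (\<integral>x. ln (f x) \<partial>P)"
  using H_sup_le_H_sup_P_plus_integral_ln_density H_sup_P_plus_integral_ln_density_le_H_sup
  by (rule antisym)

end

theorem mainTheorem5:
  fixes MX :: "'a measure" and MY :: "'b measure"
    and P \<nu> :: "'a measure" and \<pi> :: "('a \<times> 'b) measure"
  assumes "prob_space P" and "sets P = sets MX"
    and "prob_space \<pi>" and "sets \<pi> = sets (MX \<Otimes>\<^sub>M MY)"
    and "distr \<pi> MX fst = P"
    and "prob_space \<nu>" and "sets \<nu> = sets MX"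
    and "\<bar>S_ent \<nu> P\<bar> \<noteq> \<infinity>" and "\<bar>H_ent \<nu> MY \<pi>\<bar> \<noteq> \<infinity>"
  shows "info_gain \<pi> MY P = S_ent \<nu> P - H_ent \<nu> MY \<pi>"
proof -
  have S_fin: "S_sup \<nu> P \<noteq> \<infinity>"
    using assms(8) by (auto simp: S_ent_eq_uminus_S_sup)
  have sets: "sets P = sets \<nu>"
    using assms(2,7) by simp
  obtain f where f: "f \<in> borel_measurable \<nu>" "\<And>x. 0 \<le> f x" "P = density \<nu> (\<lambda>x. ennreal (f x))"
    using density_if_S_sup_finite[OF assms(6,1) sets S_fin] by blast
  interpret prob_density_coupling \<nu> P f MX MY \<pi>
    by (intro prob_density_coupling.intro prob_density.intro prob_density_coupling_axioms.intro)
      (fact assms f S_fin)+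
  show ?thesis
    unfolding info_gain_def S_ent_eq_uminus_S_sup H_ent_eq_uminus_H_sup
      S_sup_eq_integral_ln_density H_sup_eq_H_sup_P_plus_integral_ln_density
    by (cases "H_sup P MY \<pi>") auto
qed

end
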